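(* Let $\theta(3)$ be the quiver with two vertices $1,2$ and three arrows $a,b,c$ from $1$ to $2$. Let $W\in\operatorname{Rep}(\theta(3),(3,3))$ be such that $W(a),W(b),W(c)$ are linearly independent skew-symmetric $3\times3$ matrices, and let $\sigma=(1,-1)$ (i.e. $\sigma(1)=1$, $\sigma(2)=-1$). Then $n\sigma\in S(W)$ for some integer $n\ge1$, but $\sigma\notin S(W)$; in particular $S(W)$ is not saturated.
   Context: Work over an algebraically closed field $k$ of characteristic zero. $\operatorname{Rep}(\theta(3),(3,3))$ is the space of triples of $3\times3$ matrices, acted on by $\operatorname{GL}_3\times\operatorname{GL}_3$ via $(g_1,g_2)\cdot W(a)=g_2W(a)g_1^{-1}$. $\operatorname{SI}_\sigma$ is the space of polynomial functions $f$ with $g\cdot f=\det(g_1)^{\sigma(1)}\det(g_2)^{\sigma(2)}f$, and $S(W)=\{\sigma\in\mathbb{Z}^2\mid \exists f\in\operatorname{SI}_\sigma,\ f(W)\neq0\}$. *)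

theory Defs
  imports "HOL-Analysis.Analysis" "HOL-Computational_Algebra.Polynomial"
begin

datatype theta3_arrow = Arr_a | Arr_b | Arr_c

type_synonym 'k rep33 = "theta3_arrow \<Rightarrow> 'k^3^3"

definition alg_closed :: "'k::field itself \<Rightarrow> bool" where
  "alg_closed _ \<longleftrightarrow> (\<forall>p::'k poly. degree p \<ge> 1 \<longrightarrow> (\<exists>x. poly p x = 0))"

inductive_set poly_fun :: "('k::comm_ring_1 rep33 \<Rightarrow> 'k) set" where
  const: "(\<lambda>W. c) \<in> poly_fun"
| coord: "(\<lambda>W. W x $ i $ j) \<in> poly_fun"
| add: "f \<in> poly_fun \<Longrightarrow> g \<in> poly_fun \<Longrightarrow> (\<lambda>W. f W + g W) \<in> poly_fun"
| mult: "f \<in> poly_fun \<Longrightarrow> g \<in> poly_fun \<Longrightarrow> (\<lambda>W. f W * g W) \<in> poly_fun"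

definition rep_act :: "'k::field^3^3 \<Rightarrow> 'k^3^3 \<Rightarrow> 'k rep33 \<Rightarrow> 'k rep33" where
  "rep_act g1 g2 W = (\<lambda>x. g2 ** W x ** matrix_inv g1)"

text \<open>SI_sigma: polynomial f with g.f = det(g1)^sigma(1) det(g2)^sigma(2) f,
  where (g.f)(W) = f(g^{-1}.W).\<close>
definition SI :: "int \<times> int \<Rightarrow> ('k::field rep33 \<Rightarrow> 'k) set" where
  "SI \<sigma> = {f \<in> poly_fun. \<forall>g1 g2 :: 'k^3^3. invertible g1 \<and> invertible g2 \<longrightarrow>
      (\<forall>W. f (rep_act (matrix_inv g1) (matrix_inv g2) W)
           = det g1 powi (fst \<sigma>) * det g2 powi (snd \<sigma>) * f W)}"

definition S_W :: "'k::field rep33 \<Rightarrow> (int \<times> int) set" where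
  "S_W W = {\<sigma>. \<exists>f \<in> SI \<sigma>. f W \<noteq> 0}"

definition skew_symmetric :: "'k::comm_ring_1^3^3 \<Rightarrow> bool" where
  "skew_symmetric M \<longleftrightarrow> transpose M = - M"

definition lin_indep3 :: "'k::field^3^3 \<Rightarrow> 'k^3^3 \<Rightarrow> 'k^3^3 \<Rightarrow> bool" where
  "lin_indep3 A B C \<longleftrightarrow> (\<forall>\<alpha> \<beta> \<gamma>. (\<forall>i j. \<alpha> * A $ i $ j + \<beta> * B $ i $ j + \<gamma> * C $ i $ j = 0)
      \<longrightarrow> \<alpha> = 0 \<and> \<beta> = 0 \<and> \<gamma> = 0)"

end

theory Submission
  imports Defs
begin

text \<open>
  Weight (2,-2): the polynomial V \<mapsto> tr(adj V(a) V(b) adj V(c) V(b)) transforms by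
  det(h)^2 det(g)^2 under V \<mapsto> h V g, because adj reverses products and adj h h = det h.
  On a triple of skew-symmetric matrices it equals -det(N)^2, where the rows of N are the
  coordinates (W12, W13, W23) of W(a), W(b), W(c); linear independence makes N invertible.

  Weight (1,-1): a semi-invariant f of this weight satisfies f(h V g) = det h det g f(V).
  Scaling one row by a diagonal matrix shows that f is homogeneous of degree one in each row
  (taken simultaneously across the three arrows), so f is additive in each row, and it vanishes
  as soon as some column is zero. Expanding a skew-symmetric triple row by row leaves only two
  terms, and these are exchanged by a signed cyclic permutation with det h det g = -1.
\<close>

section \<open>Semi-invariants as a law under left and right multiplication\<close>

lemma matrix_inv_right:
  fixes A :: "'a::field^'n^'n"
  assumes "invertible A"
  shows "A ** matrix_inv A = mat 1"
  using someI_ex[OF assms[unfolded invertible_def]] unfolding matrix_inv_def by auto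

lemma matrix_inv_left:
  fixes A :: "'a::field^'n^'n"
  assumes "invertible A"
  shows "matrix_inv A ** A = mat 1"
  using someI_ex[OF assms[unfolded invertible_def]] unfolding matrix_inv_def by auto

lemma invertible_matrix_inv:
  fixes A :: "'a::field^'n^'n"
  assumes "invertible A"
  shows "invertible (matrix_inv A)"
  using matrix_inv_left[OF assms] matrix_inv_right[OF assms] unfolding invertible_def by blast

lemma matrix_inv_matrix_inv:
  fixes A :: "'a::field^'n^'n"
  assumes "invertible A"
  shows "matrix_inv (matrix_inv A) = A"
proof -
  have "matrix_inv (matrix_inv A) = (A ** matrix_inv A) ** matrix_inv (matrix_inv A)"
    by (simp add: matrix_inv_right[OF assms])
  also have "\<dots> = A"
    by (metis matrix_mul_assoc matrix_inv_right[OF invertible_matrix_inv[OF assms]] matrix_mul_rid)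
  finally show ?thesis .
qed

lemma det_matrix_inv:
  fixes A :: "'a::field^'n^'n"
  assumes "invertible A"
  shows "det (matrix_inv A) = inverse (det A)"
proof -
  have "det A * det (matrix_inv A) = 1"
    using det_mul[of A "matrix_inv A"] matrix_inv_right[OF assms] by simp
  moreover have "det A \<noteq> 0" using assms invertible_det_nz by blast
  ultimately show ?thesis by (simp add: field_simps)
qed

lemma rep_act_matrix_inv:
  assumes "invertible g1"
  shows "rep_act (matrix_inv g1) g2 W = (\<lambda>x. g2 ** W x ** g1)"
  unfolding rep_act_def using matrix_inv_matrix_inv[OF assms] by simp

lemma SI_iff:
  fixes f :: "'k::field rep33 \<Rightarrow> 'k"
  shows "f \<in> SI (a, b) \<longleftrightarrow> f \<in> poly_fun \<and> (\<forall>h g V. invertible h \<longrightarrow> invertible g \<longrightarrow>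
           f (\<lambda>x. h ** V x ** g) = det g powi a * det h powi (-b) * f V)"
  (is "_ \<longleftrightarrow> _ \<and> ?law")
proof -
  have "?law" if "f \<in> SI (a, b)"
  proof (intro allI impI)
    fix h g :: "'k^3^3" and V assume h: "invertible h" and g: "invertible g"
    have "f (rep_act (matrix_inv g) (matrix_inv (matrix_inv h)) V)
          = det g powi a * det (matrix_inv h) powi b * f V"
      using that g invertible_matrix_inv[OF h] unfolding SI_def by auto
    then show "f (\<lambda>x. h ** V x ** g) = det g powi a * det h powi (-b) * f V"
      using h g by (simp add: rep_act_matrix_inv matrix_inv_matrix_inv det_matrix_inv
          power_int_minus power_int_inverse)
  qed
  moreover have "f \<in> SI (a, b)" if "f \<in> poly_fun" and law: "?law"
    unfolding SI_def
  proof (intro CollectI conjI allI impI that(1))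
    fix g1 g2 :: "'k^3^3" and V assume "invertible g1 \<and> invertible g2"
    then have g1: "invertible g1" and g2: "invertible g2" by auto
    have "f (\<lambda>x. matrix_inv g2 ** V x ** g1)
          = det g1 powi a * det (matrix_inv g2) powi (-b) * f V"
      using law g1 invertible_matrix_inv[OF g2] by simp
    then show "f (rep_act (matrix_inv g1) (matrix_inv g2) V)
          = det g1 powi fst (a, b) * det g2 powi snd (a, b) * f V"
      using g2 by (simp add: rep_act_matrix_inv[OF g1] det_matrix_inv power_int_minus
          power_int_inverse)
  qed
  ultimately show ?thesis unfolding SI_def by blast
qed

section \<open>Polynomial functions on a line\<close>

lemma poly_fun_restrict_line:
  assumes "f \<in> poly_fun"
  shows "\<exists>p. \<forall>t. f (\<lambda>x. \<chi> i j. P x $ i $ j + t * Q x $ i $ j) = poly p t"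
  using assms
proof induction
  case (const c)
  show ?case by (intro exI[of _ "[:c:]"]) simp
next
  case (coord x i j)
  show ?case by (intro exI[of _ "[:P x $ i $ j, Q x $ i $ j:]"]) simp
next
  case (add f g)
  then obtain p q where "\<forall>t. f (\<lambda>x. \<chi> i j. P x $ i $ j + t * Q x $ i $ j) = poly p t"
    "\<forall>t. g (\<lambda>x. \<chi> i j. P x $ i $ j + t * Q x $ i $ j) = poly q t" by blast
  then show ?case by (intro exI[of _ "p + q"]) simp
next
  case (mult f g)
  then obtain p q where "\<forall>t. f (\<lambda>x. \<chi> i j. P x $ i $ j + t * Q x $ i $ j) = poly p t"
    "\<forall>t. g (\<lambda>x. \<chi> i j. P x $ i $ j + t * Q x $ i $ j) = poly q t" by blast
  then show ?case by (intro exI[of _ "p * q"]) simp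
qed

lemma poly_eqI_nonzero:
  fixes p q :: "'k::field_char_0 poly"
  assumes "\<And>t. t \<noteq> 0 \<Longrightarrow> poly p t = poly q t"
  shows "p = q"
proof (rule ccontr)
  assume "p \<noteq> q"
  then have "finite {t. poly (p - q) t = 0}" by (intro poly_roots_finite) simp
  moreover have "- {0} \<subseteq> {t. poly (p - q) t = 0}" using assms by auto
  ultimately have "finite (- {0::'k})" by (rule finite_subset[rotated])
  then have "finite (UNIV :: 'k set)" by simp
  then show False using infinite_UNIV_char_0 by blast
qed

lemma poly_1_eq_if_reciprocal:
  fixes q h :: "'k::field_char_0 poly"
  assumes "\<And>t. t \<noteq> 0 \<Longrightarrow> poly q t = t * poly h (inverse t)"
  shows "poly q 1 = poly q 0 + poly h 0"
proof -
  let ?m = "degree h"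
  have shifted: "monom 1 ?m * q = monom 1 1 * reflect_poly h"
  proof (rule poly_eqI_nonzero)
    fix t :: 'k assume t: "t \<noteq> 0"
    show "poly (monom 1 ?m * q) t = poly (monom 1 1 * reflect_poly h) t"
      using assms[OF t] t by (simp add: poly_monom poly_reflect_poly_nz)
  qed
  have coeff_q: "coeff q n = coeff (monom 1 1 * reflect_poly h) (n + ?m)" for n
    using arg_cong[OF shifted, of "\<lambda>p. coeff p (n + ?m)"] by (simp add: coeff_monom_mult)
  have q: "q = [:coeff h 1, coeff h 0:]"
  proof (rule poly_eqI)
    fix n
    show "coeff q n = coeff [:coeff h 1, coeff h 0:] n"
    proof (cases n)
      case 0
      then show ?thesis using coeff_q[of n]
        by (cases ?m) (auto simp: coeff_monom_mult coeff_reflect_poly coeff_eq_0)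
    next
      case (Suc k)
      then show ?thesis using coeff_q[of n]
        by (cases k) (auto simp: coeff_monom_mult coeff_reflect_poly coeff_eq_0 coeff_pCons)
    qed
  qed
  show ?thesis by (subst (1 2) q) (simp add: poly_0_coeff_0)
qed

section \<open>A semi-invariant of weight (2,-2)\<close>

lemma numeral_3_simps:
  "(1::3) + 1 = 2" "(1::3) + 2 = 3" "(2::3) + 1 = 3" "(2::3) + 2 = 1" "(3::3) + 1 = 1"
  "(3::3) + 2 = 2" "(4::3) = 1" "(5::3) = 2"
  by simp_all

(* Indices live in the type 3, so j+1 and j+2 wrap around: adj3 A is the transposed
   cofactor matrix of A. *)
definition adj3 :: "'k::comm_ring_1^3^3 \<Rightarrow> 'k^3^3" where
  "adj3 A = (\<chi> i j. A$(j+1)$(i+1) * A$(j+2)$(i+2) - A$(j+1)$(i+2) * A$(j+2)$(i+1))"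

lemma adj3_mult: "adj3 (X ** Y) = adj3 Y ** adj3 (X :: 'k::comm_ring_1^3^3)"
  unfolding vec_eq_iff forall_3 adj3_def matrix_matrix_mult_def
  by (simp add: sum_3 numeral_3_simps) (simp add: algebra_simps)

lemma adj3_mult_self: "adj3 X ** X = mat (det (X :: 'k::comm_ring_1^3^3))"
  unfolding vec_eq_iff forall_3 adj3_def matrix_matrix_mult_def det_3 mat_def
  by (simp add: sum_3 numeral_3_simps) (simp add: algebra_simps)

lemma mult_adj3_self: "X ** adj3 X = mat (det (X :: 'k::comm_ring_1^3^3))"
  unfolding vec_eq_iff forall_3 adj3_def matrix_matrix_mult_def det_3 mat_def
  by (simp add: sum_3 numeral_3_simps) (simp add: algebra_simps)

lemma mat_mult_eq_scale: "mat c ** A = (\<chi> i j. c * A $ i $ j)" for A :: "'a::semiring_1^'n^'m"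
  unfolding matrix_matrix_mult_def mat_def
  by (auto simp: if_distrib if_distribR sum.delta'[OF finite] cong: if_cong)

lemma mult_mat_eq_scale: "A ** mat c = (\<chi> i j. A $ i $ j * c)" for A :: "'a::semiring_1^'n^'m"
  unfolding matrix_matrix_mult_def mat_def
  by (auto simp: if_distrib if_distribR sum.delta'[OF finite] cong: if_cong)

lemma mult_mat_mult: "A ** (mat c ** B) = mat c ** (A ** B)"
  for A :: "'a::comm_semiring_1^'n^'m"
proof -
  have "A ** mat c = mat c ** A"
    by (simp add: mat_mult_eq_scale mult_mat_eq_scale mult.commute)
  then show ?thesis by (metis matrix_mul_assoc)
qed

lemma mat_mult_mat_mult: "mat a ** (mat b ** B) = mat (a * b) ** B"
  for B :: "'a::semiring_1^'n^'m"
  by (simp add: mat_mult_eq_scale vec_eq_iff mult.assoc)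

lemma mat_mult_mult_mat_mult: "(mat a ** X) ** (mat b ** Y) = mat (a * b) ** (X ** Y)"
  for X :: "'a::comm_semiring_1^'n^'m"
  by (metis matrix_mul_assoc mult_mat_mult mat_mult_mat_mult)

lemma trace_mat_mult: "trace (mat c ** A) = c * trace (A :: 'a::semiring_1^'n^'n)"
  by (simp add: mat_mult_eq_scale trace_def sum_distrib_left)

lemma adj3_mult_self_mult: "adj3 X ** (X ** Y) = mat (det X) ** (Y :: 'k::comm_ring_1^'n^3)"
  by (simp add: matrix_mul_assoc adj3_mult_self)

lemma mult_adj3_self_mult: "X ** (adj3 X ** Y) = mat (det X) ** (Y :: 'k::comm_ring_1^'n^3)"
  by (simp add: matrix_mul_assoc mult_adj3_self)

lemma trace_adj3_conj: "trace (adj3 g ** (R ** g)) = det g * trace (R :: 'k::comm_ring_1^3^3)"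
proof -
  have "trace (adj3 g ** (R ** g)) = trace (g ** (adj3 g ** R))"
    using trace_mul_sym[of "adj3 g ** R" g] by (simp add: matrix_mul_assoc)
  then show ?thesis by (simp add: mult_adj3_self_mult trace_mat_mult)
qed

lemma adj3_conj_mult:
  "(adj3 g ** (P ** g)) ** (adj3 g ** (Q ** g)) = mat (det g) ** (adj3 g ** ((P ** Q) ** g))"
  for g :: "'k::comm_ring_1^3^3"
proof -
  have "(adj3 g ** (P ** g)) ** (adj3 g ** (Q ** g)) = adj3 g ** (P ** (g ** (adj3 g ** (Q ** g))))"
    by (simp only: matrix_mul_assoc)
  also have "\<dots> = mat (det g) ** (adj3 g ** (P ** (Q ** g)))"
    by (simp only: mult_adj3_self_mult mult_mat_mult)
  finally show ?thesis by (simp only: matrix_mul_assoc)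
qed

lemma adj3_mult_left_right:
  "adj3 (h ** A ** g) ** (h ** B ** g) = mat (det h) ** (adj3 g ** ((adj3 A ** B) ** g))"
  for g :: "'k::comm_ring_1^3^3"
proof -
  have "adj3 (h ** A ** g) ** (h ** B ** g) = adj3 g ** (adj3 A ** (adj3 h ** (h ** (B ** g))))"
    by (simp only: adj3_mult matrix_mul_assoc)
  also have "\<dots> = mat (det h) ** (adj3 g ** (adj3 A ** (B ** g)))"
    by (simp only: adj3_mult_self_mult mult_mat_mult)
  finally show ?thesis by (simp only: matrix_mul_assoc)
qed

definition adj_trace :: "'k::comm_ring_1 rep33 \<Rightarrow> 'k" where
  "adj_trace V = trace (adj3 (V Arr_a) ** V Arr_b ** adj3 (V Arr_c) ** V Arr_b)"

lemma adj_trace_mult_left_right: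
  "adj_trace (\<lambda>x. h ** V x ** g) = det h ^ 2 * det g ^ 2 * adj_trace (V :: 'k::comm_ring_1 rep33)"
proof -
  let ?P = "adj3 (V Arr_a) ** V Arr_b" and ?Q = "adj3 (V Arr_c) ** V Arr_b"
  have "adj_trace (\<lambda>x. h ** V x ** g)
        = trace ((adj3 (h ** V Arr_a ** g) ** (h ** V Arr_b ** g))
                 ** (adj3 (h ** V Arr_c ** g) ** (h ** V Arr_b ** g)))"
    unfolding adj_trace_def by (simp only: matrix_mul_assoc)
  also have "\<dots> = trace (mat (det h * det h) ** (mat (det g) ** (adj3 g ** ((?P ** ?Q) ** g))))"
    by (simp only: adj3_mult_left_right mat_mult_mult_mat_mult adj3_conj_mult)
  also have "\<dots> = det h ^ 2 * det g ^ 2 * adj_trace V"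
    by (simp only: mat_mult_mat_mult trace_mat_mult trace_adj3_conj)
       (simp add: adj_trace_def matrix_mul_assoc power2_eq_square)
  finally show ?thesis .
qed

lemma poly_fun_diff: "f \<in> poly_fun \<Longrightarrow> g \<in> poly_fun \<Longrightarrow> (\<lambda>W. f W - g W) \<in> poly_fun"
  using poly_fun.add[OF _ poly_fun.mult[OF poly_fun.const[of "-1"]], of f g] by simp

definition matrix_poly_fun :: "('k::comm_ring_1 rep33 \<Rightarrow> 'k^3^3) \<Rightarrow> bool" where
  "matrix_poly_fun M \<longleftrightarrow> (\<forall>i j. (\<lambda>V. M V $ i $ j) \<in> poly_fun)"

lemma matrix_poly_fun_arrow: "matrix_poly_fun (\<lambda>V. V x)"
  unfolding matrix_poly_fun_def by (auto intro: poly_fun.coord)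

lemma matrix_poly_fun_mult:
  "matrix_poly_fun M \<Longrightarrow> matrix_poly_fun N \<Longrightarrow> matrix_poly_fun (\<lambda>V. M V ** N V)"
  unfolding matrix_poly_fun_def matrix_matrix_mult_def by (simp add: sum_3 poly_fun.add poly_fun.mult)

lemma matrix_poly_fun_adj3: "matrix_poly_fun M \<Longrightarrow> matrix_poly_fun (\<lambda>V. adj3 (M V))"
  unfolding matrix_poly_fun_def adj3_def by (simp add: poly_fun_diff poly_fun.mult)

lemma poly_fun_trace: "matrix_poly_fun M \<Longrightarrow> (\<lambda>V. trace (M V)) \<in> poly_fun"
  unfolding matrix_poly_fun_def trace_def by (simp add: sum_3 poly_fun.add)

lemma adj_trace_in_SI: "(adj_trace :: 'k::field rep33 \<Rightarrow> 'k) \<in> SI (2, -2)"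
proof -
  have "adj_trace \<in> (poly_fun :: ('k rep33 \<Rightarrow> 'k) set)"
    unfolding adj_trace_def
    by (intro poly_fun_trace matrix_poly_fun_mult matrix_poly_fun_adj3 matrix_poly_fun_arrow)
  then show ?thesis
    unfolding SI_iff by (simp add: adj_trace_mult_left_right power_int_minus)
qed

lemma skew_symmetric_entries:
  fixes M :: "'k::field_char_0^3^3"
  assumes "skew_symmetric M"
  shows "M $ i $ i = 0" "M $ j $ i = - M $ i $ j"
proof -
  have swap: "M $ j $ i = - M $ i $ j" for i j
    using arg_cong[OF assms[unfolded skew_symmetric_def], of "\<lambda>A. A $ i $ j"]
    by (simp add: transpose_def)
  then show "M $ j $ i = - M $ i $ j" .
  show "M $ i $ i = 0" using swap[of i i] by simp
qed

lemma skew_symmetric_zero_if_upper_zero: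
  fixes M :: "'k::field_char_0^3^3"
  assumes skew: "skew_symmetric M" and upper: "M $ 1 $ 2 = 0" "M $ 1 $ 3 = 0" "M $ 2 $ 3 = 0"
  shows "M $ i $ j = 0"
proof -
  have lower: "M $ 2 $ 1 = 0" "M $ 3 $ 1 = 0" "M $ 3 $ 2 = 0"
    using upper skew_symmetric_entries(2)[OF skew, of 1 2] skew_symmetric_entries(2)[OF skew, of 1 3]
      skew_symmetric_entries(2)[OF skew, of 2 3] by simp_all
  show ?thesis
    using exhaust_3[of i] exhaust_3[of j] upper lower skew_symmetric_entries(1)[OF skew] by auto
qed

lemma skew_symmetric_lincomb:
  fixes A B C :: "'k::field_char_0^3^3"
  assumes "skew_symmetric A" "skew_symmetric B" "skew_symmetric C"
  shows "skew_symmetric (\<chi> i j. \<alpha> * A $ i $ j + \<beta> * B $ i $ j + \<gamma> * C $ i $ j)"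
  unfolding skew_symmetric_def
proof (intro vec_eq_iff[THEN iffD2] allI)
  fix i j
  have "A $ j $ i = - A $ i $ j" "B $ j $ i = - B $ i $ j" "C $ j $ i = - C $ i $ j"
    using assms by (blast intro: skew_symmetric_entries)+
  then show "transpose (\<chi> i j. \<alpha> * A $ i $ j + \<beta> * B $ i $ j + \<gamma> * C $ i $ j) $ i $ j
             = (- (\<chi> i j. \<alpha> * A $ i $ j + \<beta> * B $ i $ j + \<gamma> * C $ i $ j)) $ i $ j"
    by (simp add: transpose_def)
qed

definition skew_coordinates :: "'k::field rep33 \<Rightarrow> 'k^3^3" where
  "skew_coordinates W = vector [vector [W Arr_a $ 1 $ 2, W Arr_a $ 1 $ 3, W Arr_a $ 2 $ 3],
                                vector [W Arr_b $ 1 $ 2, W Arr_b $ 1 $ 3, W Arr_b $ 2 $ 3],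
                                vector [W Arr_c $ 1 $ 2, W Arr_c $ 1 $ 3, W Arr_c $ 2 $ 3]]"

lemma det_skew_coordinates_nonzero:
  fixes W :: "'k::field_char_0 rep33"
  assumes skew: "\<And>x. skew_symmetric (W x)"
    and indep: "lin_indep3 (W Arr_a) (W Arr_b) (W Arr_c)"
  shows "det (skew_coordinates W) \<noteq> 0"
proof
  assume "det (skew_coordinates W) = 0"
  then have "\<not> (\<exists>B. skew_coordinates W ** B = mat 1)"
    using invertible_det_nz invertible_right_inverse by blast
  then obtain c i where c: "(\<Sum>i\<in>UNIV. c i *s row i (skew_coordinates W)) = 0" and "c i \<noteq> 0"
    unfolding matrix_right_invertible_independent_rows by blast
  let ?M = "\<chi> i j. c 1 * W Arr_a $ i $ j + c 2 * W Arr_b $ i $ j + c 3 * W Arr_c $ i $ j"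
  have "?M $ 1 $ 2 = 0" "?M $ 1 $ 3 = 0" "?M $ 2 $ 3 = 0"
    using c unfolding vec_eq_iff forall_3
    by (simp_all add: sum_3 row_def skew_coordinates_def vector_3)
  from skew_symmetric_zero_if_upper_zero[OF skew_symmetric_lincomb[OF skew skew skew] this]
  have "\<forall>i j. c 1 * W Arr_a $ i $ j + c 2 * W Arr_b $ i $ j + c 3 * W Arr_c $ i $ j = 0"
    by simp
  with indep have "c 1 = 0 \<and> c 2 = 0 \<and> c 3 = 0"
    unfolding lin_indep3_def by blast
  with \<open>c i \<noteq> 0\<close> show False
    using exhaust_3[of i] by auto
qed

lemma adj_trace_skew:
  fixes W :: "'k::field_char_0 rep33"
  assumes "\<And>x. skew_symmetric (W x)"
  shows "adj_trace W = - (det (skew_coordinates W) ^ 2)"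
proof -
  have skew_entries: "\<And>x i. W x $ i $ i = 0" "\<And>x. W x $ 2 $ 1 = - W x $ 1 $ 2"
    "\<And>x. W x $ 3 $ 1 = - W x $ 1 $ 3" "\<And>x. W x $ 3 $ 2 = - W x $ 2 $ 3"
    by (rule skew_symmetric_entries[OF assms])+
  have "adj_trace W = - (det (skew_coordinates W) * det (skew_coordinates W))"
    unfolding adj_trace_def adj3_def trace_def matrix_matrix_mult_def det_3 skew_coordinates_def
    by (simp add: sum_3 numeral_3_simps skew_entries vector_3) (simp add: algebra_simps)
  then show ?thesis by (simp add: power2_eq_square)
qed

lemma skew_in_S_W_2_neg2:
  fixes W :: "'k::field_char_0 rep33"
  assumes "\<And>x. skew_symmetric (W x)" and "lin_indep3 (W Arr_a) (W Arr_b) (W Arr_c)"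
  shows "(2, -2) \<in> S_W W"
proof -
  have "adj_trace W \<noteq> 0"
    using adj_trace_skew[OF assms(1)] det_skew_coordinates_nonzero[OF assms] by simp
  then show ?thesis unfolding S_W_def using adj_trace_in_SI by blast
qed

section \<open>Semi-invariants of weight (1,-1) vanish on skew-symmetric triples\<close>

lemma SI_1_neg1_mult_left_right:
  fixes f :: "'k::field rep33 \<Rightarrow> 'k"
  assumes "f \<in> SI (1, -1)" and "det h \<noteq> 0" and "det g \<noteq> 0"
  shows "f (\<lambda>x. h ** V x ** g) = det h * det g * f V"
  using assms unfolding SI_iff invertible_det_nz by simp

definition diag_mat :: "('n \<Rightarrow> 'k::zero) \<Rightarrow> 'k^'n^'n" where
  "diag_mat d = (\<chi> a b. if a = b then d a else 0)"

lemma det_diag_mat: "det (diag_mat d) = (\<Prod>a\<in>UNIV. d a)"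
  by (simp add: det_diagonal diag_mat_def)

lemma diag_mat_mult: "diag_mat d ** M = (\<chi> a b. d a * M $ a $ b)"
  unfolding diag_mat_def matrix_matrix_mult_def
  by (auto simp: if_distrib if_distribR sum.delta'[OF finite] cong: if_cong)

lemma mult_diag_mat: "M ** diag_mat d = (\<chi> a b. M $ a $ b * d b)"
  unfolding diag_mat_def matrix_matrix_mult_def
  by (auto simp: if_distrib if_distribR sum.delta'[OF finite] cong: if_cong)

lemma det_diag_mat_single: "det (diag_mat (\<lambda>a. if a = i then s else 1)) = s"
  by (simp add: det_diag_mat prod.delta)

definition replace_row :: "'k rep33 \<Rightarrow> 3 \<Rightarrow> (theta3_arrow \<Rightarrow> 'k^3) \<Rightarrow> 'k rep33" where
  "replace_row V i R = (\<lambda>x. \<chi> a. if a = i then R x else V x $ a)"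

lemma SI_1_neg1_replace_row_scale:
  fixes f :: "'k::field rep33 \<Rightarrow> 'k"
  assumes f: "f \<in> SI (1, -1)" and s: "s \<noteq> 0"
  shows "f (replace_row V i (\<lambda>x. s *s R x)) = s * f (replace_row V i R)"
proof -
  let ?D = "diag_mat (\<lambda>a. if a = i then s else 1) :: 'k^3^3"
  have "replace_row V i (\<lambda>x. s *s R x) = (\<lambda>x. ?D ** replace_row V i R x ** mat 1)"
    by (auto simp: diag_mat_mult replace_row_def vec_eq_iff)
  then show ?thesis
    using SI_1_neg1_mult_left_right[OF f, of ?D "mat 1"] s by (simp add: det_diag_mat_single)
qed

(* On the line t \<mapsto> A + t B the semi-invariant is a polynomial q, and homogeneity in the row
   gives q(t) = t h(1/t) for the polynomial h on the reversed line B + t A; so q is affine. *)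
lemma SI_1_neg1_replace_row_add:
  fixes f :: "'k::field_char_0 rep33 \<Rightarrow> 'k"
  assumes f: "f \<in> SI (1, -1)"
  shows "f (replace_row V i (\<lambda>x. A x + B x)) = f (replace_row V i A) + f (replace_row V i B)"
proof -
  have line: "\<exists>p. \<forall>t. f (replace_row V i (\<lambda>x. C x + t *s D x)) = poly p t" for C D
  proof -
    have "replace_row V i (\<lambda>x. C x + t *s D x)
          = (\<lambda>x. \<chi> a b. replace_row V i C x $ a $ b + t * replace_row (\<lambda>_. 0) i D x $ a $ b)" for t
      by (auto simp: replace_row_def vec_eq_iff)
    moreover have "f \<in> poly_fun" using f unfolding SI_iff by blast
    ultimately show ?thesis by (simp only:) (rule poly_fun_restrict_line)
  qed
  obtain q where q: "f (replace_row V i (\<lambda>x. A x + t *s B x)) = poly q t" for t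
    using line by blast
  obtain h where h: "f (replace_row V i (\<lambda>x. B x + t *s A x)) = poly h t" for t
    using line by blast
  have "poly q t = t * poly h (inverse t)" if t: "t \<noteq> 0" for t
  proof -
    have "poly q t = f (replace_row V i (\<lambda>x. A x + t *s B x))" by (rule q[symmetric])
    also have "(\<lambda>x. A x + t *s B x) = (\<lambda>x. t *s (B x + inverse t *s A x))"
      using t by (simp add: vec_eq_iff algebra_simps)
    also have "f (replace_row V i \<dots>) = t * f (replace_row V i (\<lambda>x. B x + inverse t *s A x))"
      by (rule SI_1_neg1_replace_row_scale[OF f t])
    finally show ?thesis by (simp only: h)
  qed
  from poly_1_eq_if_reciprocal[OF this] show ?thesis
    unfolding q[symmetric] h[symmetric] by simp
qed

lemma SI_1_neg1_zero_column:
  fixes f :: "'k::field_char_0 rep33 \<Rightarrow> 'k"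
  assumes f: "f \<in> SI (1, -1)" and zero: "\<And>x a. V x $ a $ j = 0"
  shows "f V = 0"
proof -
  let ?D = "diag_mat (\<lambda>a. if a = j then 2 else 1) :: 'k^3^3"
  have "V = (\<lambda>x. mat 1 ** V x ** ?D)"
    using zero by (auto simp: mult_diag_mat vec_eq_iff)
  then have "f V = 2 * f V"
    using SI_1_neg1_mult_left_right[OF f, of "mat 1" ?D V] by (simp add: det_diag_mat_single)
  then show ?thesis by simp
qed

definition rows3 :: "(theta3_arrow \<Rightarrow> 'k::zero^3) \<Rightarrow> (theta3_arrow \<Rightarrow> 'k^3) \<Rightarrow> (theta3_arrow \<Rightarrow> 'k^3) \<Rightarrow> 'k rep33"
  where "rows3 R1 R2 R3 = (\<lambda>x. vector [R1 x, R2 x, R3 x])"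

lemma rows3_eq_replace_row:
  "rows3 R R2 R3 = replace_row (rows3 R1 R2 R3) 1 R"
  "rows3 R1 R R3 = replace_row (rows3 R1 R2 R3) 2 R"
  "rows3 R1 R2 R = replace_row (rows3 R1 R2 R3) 3 R"
  unfolding rows3_def replace_row_def by (auto simp: vec_eq_iff forall_3 vector_3)

lemma SI_1_neg1_rows3_add:
  fixes f :: "'k::field_char_0 rep33 \<Rightarrow> 'k"
  assumes "f \<in> SI (1, -1)"
  shows "f (rows3 (\<lambda>x. A x + B x) R2 R3) = f (rows3 A R2 R3) + f (rows3 B R2 R3)"
    and "f (rows3 R1 (\<lambda>x. A x + B x) R3) = f (rows3 R1 A R3) + f (rows3 R1 B R3)"
    and "f (rows3 R1 R2 (\<lambda>x. A x + B x)) = f (rows3 R1 R2 A) + f (rows3 R1 R2 B)"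
    using SI_1_neg1_replace_row_add[OF assms, of "rows3 A R2 R3" 1 A B]
      SI_1_neg1_replace_row_add[OF assms, of "rows3 R1 A R3" 2 A B]
      SI_1_neg1_replace_row_add[OF assms, of "rows3 R1 R2 A" 3 A B]
    by (simp_all only: rows3_eq_replace_row[symmetric])

lemma SI_1_neg1_vanishes_on_skew:
  fixes f :: "'k::field_char_0 rep33 \<Rightarrow> 'k"
  assumes f: "f \<in> SI (1, -1)" and skew: "\<And>x. skew_symmetric (W x)"
  shows "f W = 0"
proof -
  define p q r where "p x = W x $ 1 $ 2" and "q x = W x $ 1 $ 3" and "r x = W x $ 2 $ 3" for x
  define a1 b1 where "a1 x = (axis 2 (p x) :: 'k^3)" and "b1 x = (axis 3 (q x) :: 'k^3)" for x
  define a2 b2 where "a2 x = (axis 1 (- p x) :: 'k^3)" and "b2 x = (axis 3 (r x) :: 'k^3)" for x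
  define a3 b3 where "a3 x = (axis 1 (- q x) :: 'k^3)" and "b3 x = (axis 2 (- r x) :: 'k^3)" for x
  have W: "W = rows3 (\<lambda>x. a1 x + b1 x) (\<lambda>x. a2 x + b2 x) (\<lambda>x. a3 x + b3 x)"
  proof
    fix x
    have "W x $ i $ i = 0" "W x $ 2 $ 1 = - p x" "W x $ 3 $ 1 = - q x" "W x $ 3 $ 2 = - r x" for i
      unfolding p_def q_def r_def by (rule skew_symmetric_entries[OF skew])+
    then show "W x = rows3 (\<lambda>x. a1 x + b1 x) (\<lambda>x. a2 x + b2 x) (\<lambda>x. a3 x + b3 x) x"
      by (simp add: vec_eq_iff forall_3 rows3_def vector_3 axis_def a1_def b1_def a2_def b2_def
          a3_def b3_def p_def q_def r_def)
  qed
  have zero_column: "f (rows3 R1 R2 R3) = 0"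
    if "\<And>x. R1 x $ j = 0" "\<And>x. R2 x $ j = 0" "\<And>x. R3 x $ j = 0" for R1 R2 R3 j
  proof (rule SI_1_neg1_zero_column[OF f])
    fix x a
    show "rows3 R1 R2 R3 x $ a $ j = 0"
      using that exhaust_3[of a] by (auto simp: rows3_def vector_3)
  qed
  have "f (rows3 a1 a2 a3) = 0" "f (rows3 a1 a2 b3) = 0"
    by (rule zero_column[where j = 3]; simp add: axis_def a1_def a2_def a3_def b3_def)+
  moreover have "f (rows3 a1 b2 b3) = 0" "f (rows3 b1 b2 b3) = 0"
    by (rule zero_column[where j = 1]; simp add: axis_def a1_def b1_def b2_def b3_def)+
  moreover have "f (rows3 b1 a2 a3) = 0" "f (rows3 b1 b2 a3) = 0"
    by (rule zero_column[where j = 2]; simp add: axis_def b1_def a2_def b2_def a3_def)+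
  ultimately have "f W = f (rows3 a1 b2 a3) + f (rows3 b1 a2 b3)"
    unfolding W SI_1_neg1_rows3_add[OF f] by simp
  also have "f (rows3 b1 a2 b3) = - f (rows3 a1 b2 a3)"
  proof -
    let ?P = "(\<chi> i j. if j = i + 2 then 1 else 0) :: 'k^3^3"
    have "rows3 b1 a2 b3 = (\<lambda>x. - ?P ** rows3 a1 b2 a3 x ** ?P)"
      by (simp add: fun_eq_iff vec_eq_iff forall_3 matrix_matrix_mult_def sum_3 numeral_3_simps
          rows3_def vector_3 axis_def a1_def b1_def a2_def b2_def a3_def b3_def)
    moreover have "det (- ?P) = -1" "det ?P = 1"
      by (simp_all add: det_3 numeral_3_simps)
    ultimately show ?thesis
      using SI_1_neg1_mult_left_right[OF f, of "- ?P" ?P] by simp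
  qed
  finally show ?thesis by simp
qed

theorem mainTheorem11:
  fixes W :: "'k::field_char_0 rep33"
  assumes "alg_closed TYPE('k)"
    and "skew_symmetric (W Arr_a)" "skew_symmetric (W Arr_b)" "skew_symmetric (W Arr_c)"
    and "lin_indep3 (W Arr_a) (W Arr_b) (W Arr_c)"
  shows "(\<exists>n::int. n \<ge> 1 \<and> (n * 1, n * (-1)) \<in> S_W W) \<and> (1, -1) \<notin> S_W W"
proof
  have skew: "skew_symmetric (W x)" for x
    using assms(2-4) by (cases x) auto
  have "(2, -2) \<in> S_W W"
    using skew assms(5) by (rule skew_in_S_W_2_neg2)
  then show "\<exists>n::int. n \<ge> 1 \<and> (n * 1, n * (-1)) \<in> S_W W"
    by (intro exI[of _ 2]) simp
  show "(1, -1) \<notin> S_W W"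
    unfolding S_W_def using SI_1_neg1_vanishes_on_skew[of _ W] skew by blast
qed

end
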